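(* For every $d\ge3$, the functions $C_{-1}(u_1,\dots,u_d)=\phi_{-1}^{-1}(\phi_{-1}(u_1)+\cdots+\phi_{-1}(u_d))$ and $C_{-2}(u_1,\dots,u_d)=\phi_{-2}^{-1}(\phi_{-2}(u_1)+\cdots+\phi_{-2}(u_d))$, $u_1,\dots,u_d\in[0,1]$, are valid $d$-dimensional copulas.
   Context: $\phi_{-1}(x)=x-1-\log x$ and $\phi_{-2}(x)=\frac12(x^{-1}+x-2)$ for $x>0$, with $\phi_{-1}(0)=\phi_{-2}(0)=\infty$; each is a strictly decreasing bijection from $[0,1]$ onto $[0,\infty]$, and $\phi_\lambda^{-1}$ denotes its inverse (with $\phi_\lambda^{-1}(\infty)=0$). Explicitly, $\phi_{-1}^{-1}(t)=-\mathfrak{W}_0(-e^{-(t+1)})$ with $\mathfrak{W}_0$ the principal branch of the Lambert W function, and $\phi_{-2}^{-1}(t)=t+1-\sqrt{(t+1)^2-1}$. A $d$-dimensional copula is a joint CDF on $[0,1]^d$ with uniform $[0,1]$ margins. *)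

theory Defs
  imports "HOL-Probability.Probability"
begin

definition phi_m1 :: "real \<Rightarrow> ereal" where
  "phi_m1 x = (if x = 0 then \<infinity> else ereal (x - 1 - ln x))"

definition phi_m2 :: "real \<Rightarrow> ereal" where
  "phi_m2 x = (if x = 0 then \<infinity> else ereal ((inverse x + x - 2) / 2))"

definition gen_inv :: "(real \<Rightarrow> ereal) \<Rightarrow> ereal \<Rightarrow> real" where
  "gen_inv phi t = (THE x. x \<in> {0..1} \<and> phi x = t)"

definition arch_C :: "(real \<Rightarrow> ereal) \<Rightarrow> real^'n \<Rightarrow> real" where
  "arch_C phi u = gen_inv phi (\<Sum>i\<in>UNIV. phi (u $ i))"

text \<open>A d-dimensional copula (d = CARD('n)): the restriction to [0,1]^d of the joint
  CDF of a Borel probability measure on [0,1]^d whose one-dimensional margins are uniform.\<close>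

definition is_copula :: "(real^'n \<Rightarrow> real) \<Rightarrow> bool" where
  "is_copula C \<longleftrightarrow>
     (\<exists>M :: (real^'n) measure.
        prob_space M \<and> sets M = sets borel \<and>
        measure M {x. \<forall>i. 0 \<le> x $ i \<and> x $ i \<le> 1} = 1 \<and>
        (\<forall>i t. 0 \<le> t \<and> t \<le> 1 \<longrightarrow> measure M {x. x $ i \<le> t} = t) \<and>
        (\<forall>u. (\<forall>i. 0 \<le> u $ i \<and> u $ i \<le> 1) \<longrightarrow>
              C u = measure M {x. \<forall>i. x $ i \<le> u $ i}))"

end

theory Submission
  imports Defs "HOL-Complex_Analysis.Laurent_Convergence"
begin

(* Marshall-Olkin frailty construction. Suppose psi = phi^(-1) is the Laplace transform of a
   positive random variable V, and let W_1, ..., W_d be uniform on (0,1], independent of each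
   other and of V. Then X_i = psi(-ln W_i / V) satisfies P(X_i <= u_i | V) = exp(-V phi(u_i)), so
   P(X <= u) = E exp(-V (phi(u_1) + ... + phi(u_d))) = psi(phi(u_1) + ... + phi(u_d)) in every
   dimension d, and the margins are uniform because phi(1) = 0.

   For phi_{-2} and sigma = s + 1, psi(s) = sigma - sqrt(sigma^2 - 1) = sum_k c_{k+1} sigma^-(2k+1),
   where c_n >= 0 are the Taylor coefficients of 1 - sqrt(1 - y). As sigma^-(m+1) is the Laplace
   transform of the Erlang(m, 1) density, V can be given the mixture density
   sum_k c_{k+1} Erlang(2k, 1).

   For phi_{-1}, psi(s) = T(e^-(s+1)) with the tree function T(w) = sum_n n^(n-1)/n! w^n, so V can
   be taken Borel distributed: P(V = n) = n^(n-1) e^-n / n!. *)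

(* Laurent_Convergence leaves the fps_nth notation "$" active; it clashes with vec_nth. *)
unbundle no Formal_Power_Series.fps_syntax

section \<open>Archimedean copulas from frailty models\<close>

lemma borel_measurable_vec_lambda:
  fixes g :: "'n::finite \<Rightarrow> 'a \<Rightarrow> real"
  assumes [measurable]: "\<And>i. g i \<in> borel_measurable M"
  shows "(\<lambda>x. \<chi> i. g i x) \<in> borel_measurable M"
proof -
  have "(\<lambda>x. \<chi> i. g i x) = (\<lambda>x. \<Sum>i\<in>UNIV. g i x *\<^sub>R axis i 1)"
    by (auto simp: vec_eq_iff axis_def if_distrib cong: if_cong)
  also have "\<dots> \<in> borel_measurable M" by measurable
  finally show ?thesis .
qed

lemma gen_inv_eq:
  assumes "inj_on phi {0..1}" "x \<in> {0..1}" "phi x = t"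
  shows "gen_inv phi t = x"
  unfolding gen_inv_def by (rule the_equality) (use assms in \<open>auto simp: inj_on_def\<close>)

lemma arch_C_margin:
  assumes "inj_on phi {0..1}" "phi 1 = 0" "0 \<le> t" "t \<le> 1"
  shows "arch_C phi ((\<chi> j. if j = i then t else 1) :: real^'n::finite) = t"
proof -
  have "(\<Sum>j\<in>UNIV. phi ((\<chi> j. if j = i then t else 1 :: real^'n) $ j)) = phi t"
    using assms(2) by (simp add: if_distrib cong: if_cong)
  then show ?thesis
    using gen_inv_eq[OF assms(1)] assms(3,4) by (simp add: arch_C_def)
qed

lemma is_copulaI:
  fixes M :: "(real^'n::finite) measure" and C :: "real^'n \<Rightarrow> real"
  assumes M: "prob_space M" and sets_M: "sets M = sets borel"
    and support: "AE x in M. \<forall>i. 0 \<le> x $ i \<and> x $ i \<le> 1"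
    and cdf: "\<And>u. (\<And>i. 0 \<le> u $ i \<and> u $ i \<le> 1) \<Longrightarrow>
                C u = measure M {x. \<forall>i. x $ i \<le> u $ i}"
    and margins: "\<And>i t. 0 \<le> t \<Longrightarrow> t \<le> 1 \<Longrightarrow>
                C (\<chi> j. if j = i then t else 1) = t"
  shows "is_copula C"
proof -
  interpret prob_space M by (fact M)
  have space_M: "space M = UNIV" using sets_eq_imp_space_eq[OF sets_M] by simp
  have closed_sets: "S \<in> sets M" if "closed S" for S
    using that by (simp add: sets_M)
  have cube: "measure M {x. \<forall>i. 0 \<le> x $ i \<and> x $ i \<le> 1} = 1"
    using prob_Collect_eq_1[of "\<lambda>x. \<forall>i. 0 \<le> x $ i \<and> x $ i \<le> 1"] support
    by (simp add: space_M closed_sets closed_Collect_all closed_Collect_conj closed_Collect_le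
        continuous_on_component)
  have margin: "measure M {x. x $ i \<le> t} = t" if "0 \<le> t" "t \<le> 1" for i t
  proof -
    let ?u = "(\<chi> j. if j = i then t else 1) :: real^'n"
    have "measure M {x. x $ i \<le> t} = measure M {x. \<forall>j. x $ j \<le> ?u $ j}"
      by (rule finite_measure_eq_AE)
         (use support in \<open>auto simp: closed_sets closed_Collect_all closed_Collect_le
            continuous_on_component\<close>)
    also have "\<dots> = C ?u" using cdf[of ?u] that by simp
    finally show ?thesis using margins that by simp
  qed
  show ?thesis
    unfolding is_copula_def using M sets_M cube margin cdf by blast
qed

definition uniform_cube :: "('n::finite \<Rightarrow> real) measure" where
  "uniform_cube = Pi\<^sub>M UNIV (\<lambda>_. uniform_measure lborel {0<..1})"

lemma prob_space_uniform_cube: "prob_space uniform_cube"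
  unfolding uniform_cube_def
  by (intro prob_space_PiM prob_space_uniform_measure) auto

lemma space_uniform_cube: "space uniform_cube = UNIV"
  by (simp add: uniform_cube_def space_PiM PiE_UNIV_domain)

lemma sets_uniform_cube_Collect:
  "Measurable.pred uniform_cube P \<Longrightarrow> {w. P w} \<in> sets uniform_cube"
  by (simp add: pred_def space_uniform_cube)

(* Not declared [measurable]: as a global rule it derails unrelated measurability goals. *)
lemma borel_measurable_uniform_cube_component:
  "(\<lambda>w. w i) \<in> borel_measurable uniform_cube"
proof -
  have "(\<lambda>w. w i) \<in> uniform_cube \<rightarrow>\<^sub>M uniform_measure lborel {0<..1::real}"
    unfolding uniform_cube_def by (rule measurable_component_singleton) simp
  then show ?thesis
    by (simp add: measurable_cong_sets[OF refl sets_uniform_measure])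
qed

lemma emeasure_uniform_cube_PiE:
  assumes "\<And>i. A i \<in> sets borel"
  shows "emeasure uniform_cube (Pi\<^sub>E UNIV A) = (\<Prod>i\<in>UNIV. emeasure lborel ({0<..1} \<inter> A i))"
proof -
  interpret product_sigma_finite "\<lambda>_. uniform_measure lborel {0<..1::real}"
    by (intro product_sigma_finite.intro prob_space_imp_sigma_finite prob_space_uniform_measure) auto
  show ?thesis
    unfolding uniform_cube_def using assms by (simp add: emeasure_PiM emeasure_uniform_measure divide_ennreal_def)
qed

lemma emeasure_uniform_cube_box:
  assumes "\<And>i. 0 \<le> a i \<and> a i \<le> 1"
  shows "emeasure uniform_cube {w. \<forall>i. w i \<le> a i} = ennreal (\<Prod>i\<in>UNIV. a i)"
proof -
  have "{w. \<forall>i. w i \<le> a i} = Pi\<^sub>E UNIV (\<lambda>i. {..a i})"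
    by (auto simp: PiE_UNIV_domain)
  moreover have "{0<..1} \<inter> {..a i} = {0<..a i}" for i
    using assms[of i] by auto
  ultimately show ?thesis
    using assms by (simp add: emeasure_uniform_cube_PiE prod_ennreal)
qed

lemma AE_uniform_cube: "AE w in uniform_cube. \<forall>i. 0 < w i \<and> w i \<le> 1"
proof -
  interpret prob_space uniform_cube by (fact prob_space_uniform_cube)
  have "emeasure uniform_cube (Pi\<^sub>E UNIV (\<lambda>_. {0<..1})) = 1"
    by (simp add: emeasure_uniform_cube_PiE)
  then have "AE w in uniform_cube. w \<in> Pi\<^sub>E UNIV (\<lambda>_. {0<..1})"
    by (intro AE_prob_1) (simp add: measure_def)
  then show ?thesis by (rule eventually_mono) (auto simp: PiE_UNIV_domain)
qed

definition ereal_exp_neg :: "real \<Rightarrow> ereal \<Rightarrow> real" where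
  "ereal_exp_neg v t = (if t = \<infinity> then 0 else exp (- real_of_ereal t * v))"

lemma ereal_exp_neg_bounds:
  assumes "0 \<le> v" "0 \<le> t"
  shows "0 \<le> ereal_exp_neg v t \<and> ereal_exp_neg v t \<le> 1"
  using assms by (cases t) (auto simp: ereal_exp_neg_def)

lemma ereal_exp_neg_sum:
  assumes "finite I" "\<And>i. i \<in> I \<Longrightarrow> 0 \<le> t i"
  shows "ereal_exp_neg v (\<Sum>i\<in>I. t i) = (\<Prod>i\<in>I. ereal_exp_neg v (t i))"
  using assms
proof (induction I rule: finite_induct)
  case (insert j I)
  have "0 \<le> (\<Sum>i\<in>I. t i)" by (intro sum_nonneg) (use insert in auto)
  moreover have "0 \<le> t j" using insert by auto
  ultimately have "ereal_exp_neg v (t j + (\<Sum>i\<in>I. t i))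
                     = ereal_exp_neg v (t j) * ereal_exp_neg v (\<Sum>i\<in>I. t i)"
    by (cases "t j"; cases "\<Sum>i\<in>I. t i") (auto simp: ereal_exp_neg_def exp_add[symmetric] algebra_simps)
  then show ?case using insert by simp
qed (simp add: ereal_exp_neg_def zero_ereal_def)

locale archimedean_generator =
  fixes phi :: "real \<Rightarrow> ereal" and psi :: "real \<Rightarrow> real"
  assumes phi_0: "phi 0 = \<infinity>"
    and phi_1: "phi 1 = 0"
    and phi_strict_antimono:
      "\<And>u v. 0 \<le> u \<Longrightarrow> u < v \<Longrightarrow> v \<le> 1 \<Longrightarrow> phi v < phi u"
    and psi_range: "\<And>s. 0 \<le> s \<Longrightarrow> 0 < psi s \<and> psi s \<le> 1"
    and phi_psi: "\<And>s. 0 \<le> s \<Longrightarrow> phi (psi s) = ereal s"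
begin

lemma inj_on_phi: "inj_on phi {0..1}"
proof (rule inj_onI)
  fix x y assume "x \<in> {0..1}" "y \<in> {0..1}" "phi x = phi y"
  then show "x = y"
    using phi_strict_antimono[of x y] phi_strict_antimono[of y x]
    by (cases x y rule: linorder_cases) auto
qed

lemma phi_nonneg: "0 \<le> u \<Longrightarrow> u \<le> 1 \<Longrightarrow> 0 \<le> phi u"
  using phi_strict_antimono[of u 1] phi_1 by (cases "u = 1") auto

lemma gen_inv_ereal: "0 \<le> s \<Longrightarrow> gen_inv phi (ereal s) = psi s"
  using gen_inv_eq[OF inj_on_phi, of "psi s"] psi_range[of s] phi_psi[of s] by auto

lemma gen_inv_infinity: "gen_inv phi \<infinity> = 0"
  using gen_inv_eq[OF inj_on_phi, of 0] phi_0 by auto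

lemma gen_inv_nonneg: "0 \<le> t \<Longrightarrow> 0 \<le> gen_inv phi t"
  using gen_inv_ereal psi_range gen_inv_infinity
  by (cases t) (auto intro: less_imp_le)

lemma psi_le_iff:
  assumes "0 \<le> s" "0 \<le> u" "u \<le> 1"
  shows "psi s \<le> u \<longleftrightarrow> phi u \<le> ereal s"
proof
  assume "psi s \<le> u"
  then show "phi u \<le> ereal s"
    using phi_strict_antimono[of "psi s" u] psi_range[OF assms(1)] phi_psi[OF assms(1)] assms
    by (cases "psi s = u") auto
next
  assume "phi u \<le> ereal s"
  then show "psi s \<le> u"
    using phi_strict_antimono[of u "psi s"] psi_range phi_psi assms by force
qed

lemma borel_measurable_psi_max_0 [measurable]: "(\<lambda>s. psi (max 0 s)) \<in> borel_measurable borel"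
proof -
  have "mono (\<lambda>s. - psi (max 0 s))"
  proof (rule monoI)
    fix s t :: real assume "s \<le> t"
    then have "max 0 s \<le> max 0 t" by simp
    then have "phi (psi (max 0 s)) \<le> ereal (max 0 t)"
      using phi_psi[of "max 0 s"] by (metis ereal_less_eq(3) max.cobounded1)
    then show "- psi (max 0 s) \<le> - psi (max 0 t)"
      using psi_le_iff[of "max 0 t" "psi (max 0 s)"] psi_range[of "max 0 s"] by simp
  qed
  then have "(\<lambda>s. - (- psi (max 0 s))) \<in> borel_measurable borel"
    by (intro borel_measurable_uminus borel_measurable_mono)
  then show ?thesis by simp
qed

lemma psi_max_0_le_iff:
  assumes "0 < v" "0 < w" "w \<le> 1" "0 \<le> u" "u \<le> 1"
  shows "psi (max 0 (- ln w / v)) \<le> u \<longleftrightarrow> w \<le> ereal_exp_neg v (phi u)"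
proof -
  have "ln w \<le> 0" using assms by simp
  then have "0 \<le> - ln w / v" using assms by (simp add: divide_nonpos_pos)
  then have "psi (max 0 (- ln w / v)) \<le> u \<longleftrightarrow> phi u \<le> ereal (- ln w / v)"
    using psi_le_iff assms by simp
  also have "\<dots> \<longleftrightarrow> w \<le> ereal_exp_neg v (phi u)"
  proof (cases "phi u")
    case (real r)
    have "r \<le> - ln w / v \<longleftrightarrow> ln w \<le> - r * v" using assms by (auto simp: field_simps)
    also have "\<dots> \<longleftrightarrow> w \<le> exp (- r * v)" using assms by (metis exp_le_cancel_iff exp_ln)
    finally show ?thesis using real by (simp add: ereal_exp_neg_def)
  next
    case PInf
    then show ?thesis using assms by (simp add: ereal_exp_neg_def)
  next
    case MInf
    then show ?thesis using phi_nonneg assms by simp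
  qed
  finally show ?thesis .
qed

end

locale frailty = archimedean_generator +
  fixes \<Omega> :: "'w measure" and V :: "'w \<Rightarrow> real"
  assumes prob_space_\<Omega>: "prob_space \<Omega>"
    and borel_measurable_V [measurable]: "V \<in> borel_measurable \<Omega>"
    and V_pos: "AE \<omega> in \<Omega>. 0 < V \<omega>"
    and laplace_V:
      "\<And>s. 0 \<le> s \<Longrightarrow> (\<integral>\<^sup>+\<omega>. ennreal (exp (- s * V \<omega>)) \<partial>\<Omega>) = ennreal (psi s)"
begin

lemma nn_integral_ereal_exp_neg:
  assumes "0 \<le> t"
  shows "(\<integral>\<^sup>+\<omega>. ennreal (ereal_exp_neg (V \<omega>) t) \<partial>\<Omega>) = ennreal (gen_inv phi t)"
  using assms laplace_V gen_inv_ereal gen_inv_infinity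
  by (cases t) (auto simp: ereal_exp_neg_def)

(* Component i is psi(E_i / V) with E_i = -ln w_i a standard exponential variable. The max 0
   makes the map monotone (hence measurable) on all of R and only matters on a null set. *)
definition frailty_vector :: "'w \<times> ('n::finite \<Rightarrow> real) \<Rightarrow> real^'n" where
  "frailty_vector p = (\<chi> i. psi (max 0 (- ln (snd p i) / V (fst p))))"

definition frailty_measure :: "(real^'n::finite) measure" where
  "frailty_measure = distr (\<Omega> \<Otimes>\<^sub>M uniform_cube) borel frailty_vector"

lemma borel_measurable_frailty_vector:
  "frailty_vector \<in> borel_measurable (\<Omega> \<Otimes>\<^sub>M uniform_cube)"
  supply borel_measurable_uniform_cube_component [measurable]
  unfolding frailty_vector_def by (rule borel_measurable_vec_lambda) measurable

lemma prob_space_frailty_measure: "prob_space frailty_measure"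
  unfolding frailty_measure_def
  by (intro prob_space.prob_space_distr prob_space_pair prob_space_\<Omega> prob_space_uniform_cube
      borel_measurable_frailty_vector)

lemma emeasure_uniform_cube_frailty_slice:
  assumes "0 < v" "\<And>i. 0 \<le> u $ i \<and> u $ i \<le> 1"
  shows "emeasure uniform_cube {w. \<forall>i. psi (max 0 (- ln (w i) / v)) \<le> u $ i}
           = ennreal (\<Prod>i\<in>UNIV. ereal_exp_neg v (phi (u $ i)))"
  supply borel_measurable_uniform_cube_component [measurable]
proof -
  have "emeasure uniform_cube {w. \<forall>i. psi (max 0 (- ln (w i) / v)) \<le> u $ i}
      = emeasure uniform_cube {w. \<forall>i. w i \<le> ereal_exp_neg v (phi (u $ i))}"
  proof (rule emeasure_eq_AE)
    show "AE w in uniform_cube. w \<in> {w. \<forall>i. psi (max 0 (- ln (w i) / v)) \<le> u $ i}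
                           \<longleftrightarrow> w \<in> {w. \<forall>i. w i \<le> ereal_exp_neg v (phi (u $ i))}"
      using AE_uniform_cube by eventually_elim (use psi_max_0_le_iff assms in auto)
  qed (rule sets_uniform_cube_Collect, measurable)+
  also have "\<dots> = ennreal (\<Prod>i\<in>UNIV. ereal_exp_neg v (phi (u $ i)))"
    using assms ereal_exp_neg_bounds phi_nonneg
    by (intro emeasure_uniform_cube_box) (simp add: less_imp_le)
  finally show ?thesis .
qed

lemma emeasure_frailty_measure_box:
  fixes u :: "real^'n::finite"
  assumes u: "\<And>i. 0 \<le> u $ i \<and> u $ i \<le> 1"
  shows "emeasure frailty_measure {x. \<forall>i. x $ i \<le> u $ i} = ennreal (arch_C phi u)"
proof -
  interpret W: prob_space "uniform_cube :: ('n \<Rightarrow> real) measure"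
    by (fact prob_space_uniform_cube)
  let ?box = "{x :: real^'n. \<forall>i. x $ i \<le> u $ i}"
  let ?P = "\<Omega> \<Otimes>\<^sub>M (uniform_cube :: ('n \<Rightarrow> real) measure)"
  have box_sets: "?box \<in> sets borel"
    by (simp add: closed_Collect_all closed_Collect_le continuous_on_component)
  have "emeasure frailty_measure ?box = emeasure ?P (frailty_vector -` ?box \<inter> space ?P)"
    unfolding frailty_measure_def
    by (rule emeasure_distr[OF borel_measurable_frailty_vector box_sets])
  also have "\<dots> = (\<integral>\<^sup>+\<omega>. emeasure uniform_cube (Pair \<omega> -` (frailty_vector -` ?box \<inter> space ?P))
                     \<partial>\<Omega>)"
    using measurable_sets[OF borel_measurable_frailty_vector box_sets]
    by (intro W.emeasure_pair_measure_alt) simp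
  also have "\<dots> = (\<integral>\<^sup>+\<omega>. ennreal (\<Prod>i\<in>UNIV. ereal_exp_neg (V \<omega>) (phi (u $ i)))
                     \<partial>\<Omega>)"
  proof (rule nn_integral_cong_AE)
    show "AE \<omega> in \<Omega>. emeasure uniform_cube (Pair \<omega> -` (frailty_vector -` ?box \<inter> space ?P))
                     = ennreal (\<Prod>i\<in>UNIV. ereal_exp_neg (V \<omega>) (phi (u $ i)))"
      using V_pos AE_space
    proof eventually_elim
      case (elim \<omega>)
      then have "Pair \<omega> -` (frailty_vector -` ?box \<inter> space ?P)
                 = {w. \<forall>i. psi (max 0 (- ln (w i) / V \<omega>)) \<le> u $ i}"
        by (auto simp: frailty_vector_def space_pair_measure space_uniform_cube)
      then show ?case using emeasure_uniform_cube_frailty_slice[OF elim(1) u] by simp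
    qed
  qed
  also have "\<dots> = (\<integral>\<^sup>+\<omega>. ennreal (ereal_exp_neg (V \<omega>) (\<Sum>i\<in>UNIV. phi (u $ i)))
                     \<partial>\<Omega>)"
    using u phi_nonneg by (simp add: ereal_exp_neg_sum)
  also have "\<dots> = ennreal (arch_C phi u)"
    using u phi_nonneg unfolding arch_C_def by (intro nn_integral_ereal_exp_neg sum_nonneg) auto
  finally show ?thesis .
qed

theorem is_copula_arch_C: "is_copula (arch_C phi :: real^'n::finite \<Rightarrow> real)"
proof (rule is_copulaI)
  show "prob_space (frailty_measure :: (real^'n) measure)"
    by (fact prob_space_frailty_measure)
  show "sets (frailty_measure :: (real^'n) measure) = sets borel"
    by (simp add: frailty_measure_def)
  have "AE p in \<Omega> \<Otimes>\<^sub>M uniform_cube.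
          \<forall>i. 0 \<le> frailty_vector p $ i \<and> frailty_vector p $ i \<le> (1::real)"
    using psi_range by (intro AE_I2) (simp add: frailty_vector_def less_imp_le)
  then show "AE x in frailty_measure. \<forall>i. 0 \<le> x $ i \<and> x $ i \<le> 1"
    unfolding frailty_measure_def by (subst AE_distr_iff[OF borel_measurable_frailty_vector]) simp_all
  show "arch_C phi u = measure frailty_measure {x. \<forall>i. x $ i \<le> u $ i}"
    if u: "\<And>i. 0 \<le> u $ i \<and> u $ i \<le> 1" for u :: "real^'n"
  proof -
    have "0 \<le> arch_C phi u"
      unfolding arch_C_def using u phi_nonneg by (intro gen_inv_nonneg sum_nonneg) auto
    then show ?thesis by (simp add: measure_def emeasure_frailty_measure_box[OF u])
  qed
  show "arch_C phi (\<chi> j. if j = i then t else 1) = t" if "0 \<le> t" "t \<le> 1" for i t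
    by (rule arch_C_margin[OF inj_on_phi phi_1 that])
qed

end

section \<open>Power series with nonnegative coefficients\<close>

lemma sums_of_nonneg_power_series_at_left_1:
  fixes c :: "nat \<Rightarrow> real" and h g :: "real \<Rightarrow> real"
  assumes c: "\<And>n. 0 \<le> c n"
    and h: "\<And>t. 0 < t \<Longrightarrow> t < 1 \<Longrightarrow> 0 \<le> h t \<and> h t \<le> 1"
    and h_lim: "(h \<longlongrightarrow> 1) (at_left 1)"
    and sums: "\<And>t. 0 < t \<Longrightarrow> t < 1 \<Longrightarrow> (\<lambda>n. c n * h t ^ n) sums g t"
    and g_lim: "(g \<longlongrightarrow> L) (at_left 1)"
  shows "c sums L"
proof -
  have ev: "eventually (\<lambda>t. t \<in> {0<..<1}) (at_left (1::real))"
    by (rule eventually_at_left_real) simp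
  have partial_sums_le: "(\<Sum>n<N. c n) \<le> L" for N
  proof -
    have "((\<lambda>t. \<Sum>n<N. c n * h t ^ n) \<longlongrightarrow> (\<Sum>n<N. c n * 1 ^ n)) (at_left 1)"
      by (intro tendsto_intros h_lim)
    moreover have "eventually (\<lambda>t. (\<Sum>n<N. c n * h t ^ n) \<le> g t) (at_left 1)"
      using ev
    proof eventually_elim
      case (elim t)
      then have "(\<Sum>n<N. c n * h t ^ n) \<le> suminf (\<lambda>n. c n * h t ^ n)"
        using sums[of t] h[of t] c by (intro sum_le_suminf) (auto simp: sums_iff)
      then show ?case using sums[of t] elim by (simp add: sums_iff)
    qed
    ultimately show ?thesis
      using tendsto_le[OF trivial_limit_at_left_real g_lim] by simp
  qed
  have summable: "summable c" by (rule summableI_nonneg_bounded[OF c partial_sums_le])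
  have "eventually (\<lambda>t. g t \<le> suminf c) (at_left 1)"
    using ev
  proof eventually_elim
    case (elim t)
    have "suminf (\<lambda>n. c n * h t ^ n) \<le> suminf c"
      using sums[of t] h[of t] c elim summable
      by (intro suminf_le) (auto simp: sums_iff intro!: mult_right_le_one_le power_le_one)
    then show ?case using sums[of t] elim by (simp add: sums_iff)
  qed
  then have "L \<le> suminf c"
    using tendsto_le[OF trivial_limit_at_left_real tendsto_const g_lim] by simp
  with suminf_le_const[OF summable partial_sums_le] summable show ?thesis
    by (simp add: sums_iff)
qed

definition sqrt_coeff :: "nat \<Rightarrow> real" where
  "sqrt_coeff n = (if n = 0 then 0 else - ((1/2) gchoose n) * (-1) ^ n)"

lemma sqrt_coeff_Suc: "sqrt_coeff (Suc k) = pochhammer (1/2) k / (2 * fact (Suc k))"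
proof -
  have "((1/2::real) gchoose Suc k) * (-1) ^ Suc k = pochhammer (- 1/2) (Suc k) / fact (Suc k)"
    by (simp add: gbinomial_pochhammer power_mult_distrib[symmetric])
  also have "pochhammer (- 1/2 :: real) (Suc k) = - pochhammer (1/2) k / 2"
    by (simp add: pochhammer_rec)
  finally show ?thesis by (simp add: sqrt_coeff_def)
qed

lemma sqrt_coeff_nonneg: "0 \<le> sqrt_coeff n"
proof (cases n)
  case (Suc k)
  then show ?thesis by (simp only: sqrt_coeff_Suc) (simp add: pochhammer_nonneg)
qed (simp add: sqrt_coeff_def)

lemma sqrt_coeff_sums_less_1:
  assumes "0 \<le> y" "y < 1"
  shows "(\<lambda>n. sqrt_coeff n * y ^ n) sums (1 - sqrt (1 - y))"
proof -
  have "(\<lambda>n. ((1/2) gchoose n) * (- y) ^ n) sums sqrt (1 - y)"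
    using gen_binomial_real[of "- y" "1/2"] assms by (simp add: powr_half_sqrt)
  then have "(\<lambda>n. (if n = 0 then 1 else 0) - ((1/2) gchoose n) * (- y) ^ n) sums (1 - sqrt (1 - y))"
    by (intro sums_diff sums_single[of 0 "\<lambda>_. 1::real", simplified])
  moreover have "(if n = 0 then 1 else 0) - ((1/2) gchoose n) * (- y) ^ n = sqrt_coeff n * y ^ n" for n
    by (simp add: sqrt_coeff_def power_minus[of y])
  ultimately show ?thesis by simp
qed

lemma sqrt_coeff_sums:
  assumes "0 \<le> y" "y \<le> 1"
  shows "(\<lambda>n. sqrt_coeff n * y ^ n) sums (1 - sqrt (1 - y))"
proof (cases "y = 1")
  case True
  have "sqrt_coeff sums (1 - sqrt (1 - 1))"
  proof (rule sums_of_nonneg_power_series_at_left_1[where h = "\<lambda>t. t" and g = "\<lambda>t. 1 - sqrt (1 - t)"])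
    show "(\<lambda>n. sqrt_coeff n * t ^ n) sums (1 - sqrt (1 - t))" if "0 < t" "t < 1" for t
      using sqrt_coeff_sums_less_1 that by simp
    show "((\<lambda>t. 1 - sqrt (1 - t)) \<longlongrightarrow> 1 - sqrt (1 - 1)) (at_left (1::real))"
      by (intro tendsto_intros)
  qed (auto simp: sqrt_coeff_nonneg intro: tendsto_ident_at)
  then show ?thesis using True by simp
qed (use assms sqrt_coeff_sums_less_1 in auto)


section \<open>The generator \<open>phi_m2\<close>\<close>

definition psi_m2 :: "real \<Rightarrow> real" where
  "psi_m2 s = (s + 1) - sqrt ((s + 1)\<^sup>2 - 1)"

lemma psi_m2_sums:
  assumes "0 \<le> s"
  shows "(\<lambda>k. sqrt_coeff (Suc k) * (1 / (s + 1)) ^ (2 * k + 1)) sums psi_m2 s"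
proof -
  define \<sigma> where "\<sigma> = s + 1"
  have \<sigma>: "1 \<le> \<sigma>" using assms by (simp add: \<sigma>_def)
  have "(\<lambda>n. sqrt_coeff n * (1 / \<sigma>\<^sup>2) ^ n) sums (1 - sqrt (1 - 1 / \<sigma>\<^sup>2))"
    using \<sigma> by (intro sqrt_coeff_sums) auto
  then have "(\<lambda>k. sqrt_coeff (Suc k) * (1 / \<sigma>\<^sup>2) ^ Suc k) sums (1 - sqrt (1 - 1 / \<sigma>\<^sup>2))"
    by (subst sums_Suc_iff) (simp add: sqrt_coeff_def)
  then have sums: "(\<lambda>k. sqrt_coeff (Suc k) * (1 / \<sigma>\<^sup>2) ^ Suc k * \<sigma>)
                     sums ((1 - sqrt (1 - 1 / \<sigma>\<^sup>2)) * \<sigma>)"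
    by (rule sums_mult2)
  have power_eq: "(1 / \<sigma>\<^sup>2) ^ Suc k * \<sigma> = (1 / \<sigma>) ^ (2 * k + 1)" for k
  proof -
    have "2 * Suc k = Suc (2 * k + 1)" by simp
    then have "(\<sigma>\<^sup>2) ^ Suc k = \<sigma> ^ Suc (2 * k + 1)"
      by (simp only: power_mult[symmetric])
    then have "(1 / \<sigma>\<^sup>2) ^ Suc k = (1 / \<sigma>) ^ Suc (2 * k + 1)"
      by (simp only: power_one_over)
    then show ?thesis using \<sigma> by simp
  qed
  have sqrt_eq: "(1 - sqrt (1 - 1 / \<sigma>\<^sup>2)) * \<sigma> = psi_m2 s"
  proof -
    have "sqrt (1 - 1 / \<sigma>\<^sup>2) * \<sigma> = sqrt ((1 - 1 / \<sigma>\<^sup>2) * \<sigma>\<^sup>2)"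
      using \<sigma> by (simp add: real_sqrt_mult)
    also have "(1 - 1 / \<sigma>\<^sup>2) * \<sigma>\<^sup>2 = \<sigma>\<^sup>2 - 1"
      using \<sigma> by (simp add: field_simps power2_eq_square)
    finally show ?thesis by (simp add: psi_m2_def \<sigma>_def algebra_simps)
  qed
  show ?thesis using sums unfolding mult.assoc power_eq sqrt_eq by (simp only: \<sigma>_def)
qed

lemma archimedean_generator_phi_m2: "archimedean_generator phi_m2 psi_m2"
proof (unfold_locales)
  show "phi_m2 0 = \<infinity>" "phi_m2 1 = 0" by (simp_all add: phi_m2_def)
  show "phi_m2 v < phi_m2 u" if "0 \<le> u" "u < v" "v \<le> 1" for u v
  proof (cases "u = 0")
    case False
    then have "0 < u" using that by simp
    have "u * v \<le> u * 1" using \<open>0 < u\<close> that by (intro mult_left_mono) auto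
    then have "u * v < 1" using that by simp
    moreover have "(inverse u + u) - (inverse v + v) = (v - u) * (1 - u * v) / (u * v)"
      using \<open>0 < u\<close> that by (simp add: field_simps)
    ultimately have "0 < (inverse u + u) - (inverse v + v)" using \<open>0 < u\<close> that by simp
    then show ?thesis using \<open>0 < u\<close> that by (simp add: phi_m2_def)
  qed (use that in \<open>simp add: phi_m2_def\<close>)
  fix s :: real assume "0 \<le> s"
  define \<sigma> where "\<sigma> = s + 1"
  define r where "r = sqrt (\<sigma>\<^sup>2 - 1)"
  have \<sigma>: "1 \<le> \<sigma>" using \<open>0 \<le> s\<close> by (simp add: \<sigma>_def)
  have r: "0 \<le> r" "r\<^sup>2 = \<sigma>\<^sup>2 - 1" using \<sigma> by (simp_all add: r_def)
  have psi: "psi_m2 s = \<sigma> - r" by (simp add: psi_m2_def \<sigma>_def r_def)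
  have "r < \<sigma>" using r \<sigma> by (smt (verit) power_mono)
  moreover have "(\<sigma> - 1)\<^sup>2 \<le> r\<^sup>2" using r \<sigma> by (simp add: power2_eq_square algebra_simps)
  then have "\<sigma> - 1 \<le> r" using r(1) by (rule power2_le_imp_le)
  ultimately show "0 < psi_m2 s \<and> psi_m2 s \<le> 1" using psi by simp
  have "(\<sigma> - r) * (\<sigma> + r) = 1" using r by (simp add: algebra_simps power2_eq_square)
  then have "inverse (\<sigma> - r) = \<sigma> + r" by (rule inverse_unique)
  then show "phi_m2 (psi_m2 s) = ereal s"
    using \<open>r < \<sigma>\<close> psi by (simp add: phi_m2_def \<sigma>_def)
qed

lemma erlang_density_mult_exp:
  assumes "0 < l" "0 \<le> s"
  shows "erlang_density k l x * exp (- s * x) = (l / (l + s)) ^ Suc k * erlang_density k (l + s) x"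
proof -
  have "l ^ Suc k = (l / (l + s)) ^ Suc k * (l + s) ^ Suc k"
    using assms by (simp add: power_divide)
  moreover have "exp (- l * x) * exp (- s * x) = exp (- (l + s) * x)"
    by (simp add: exp_add[symmetric] algebra_simps)
  ultimately show ?thesis
    by (simp add: erlang_density_def)
qed

lemma nn_integral_erlang_density_mult_exp:
  assumes "0 < l" "0 \<le> s"
  shows "(\<integral>\<^sup>+x. ennreal (erlang_density k l x * exp (- s * x)) \<partial>lborel)
           = ennreal ((l / (l + s)) ^ Suc k)"
proof -
  have "(\<integral>\<^sup>+x. ennreal (erlang_density k l x * exp (- s * x)) \<partial>lborel)
      = (\<integral>\<^sup>+x. ennreal ((l / (l + s)) ^ Suc k) * ennreal (erlang_density k (l + s) x) \<partial>lborel)"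
    unfolding erlang_density_mult_exp[OF assms] using assms by (intro nn_integral_cong ennreal_mult) auto
  also have "\<dots> = ennreal ((l / (l + s)) ^ Suc k) *
                     (\<integral>\<^sup>+x. ennreal (erlang_density k (l + s) x) \<partial>lborel)"
    by (rule nn_integral_cmult) measurable
  also have "(\<integral>\<^sup>+x. ennreal (erlang_density k (l + s) x) \<partial>lborel) = 1"
    using nn_integral_erlang_ith_moment[of "l + s" k 0] assms by simp
  finally show ?thesis by simp
qed

definition erlang_mixture_density :: "real \<Rightarrow> ennreal" where
  "erlang_mixture_density v = (\<Sum>k. ennreal (sqrt_coeff (Suc k) * erlang_density (2 * k) 1 v))"

lemma borel_measurable_erlang_mixture_density [measurable]:
  "erlang_mixture_density \<in> borel_measurable borel"
  unfolding erlang_mixture_density_def by measurable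

lemma laplace_erlang_mixture_density:
  assumes "0 \<le> s"
  shows "(\<integral>\<^sup>+v. ennreal (exp (- s * v)) \<partial>density lborel erlang_mixture_density)
           = ennreal (psi_m2 s)"
proof -
  have "(\<integral>\<^sup>+v. ennreal (exp (- s * v)) \<partial>density lborel erlang_mixture_density)
      = (\<integral>\<^sup>+v. (\<Sum>k. ennreal (sqrt_coeff (Suc k) * erlang_density (2 * k) 1 v) *
                       ennreal (exp (- s * v))) \<partial>lborel)"
    unfolding erlang_mixture_density_def
    by (subst nn_integral_density) (simp_all add: ennreal_suminf_multc)
  also have "\<dots> = (\<Sum>k. \<integral>\<^sup>+v. ennreal (sqrt_coeff (Suc k)) *
                     ennreal (erlang_density (2 * k) 1 v * exp (- s * v)) \<partial>lborel)"
    by (subst nn_integral_suminf[symmetric])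
       (auto intro!: nn_integral_cong simp: ennreal_mult'[symmetric] sqrt_coeff_nonneg mult.assoc)
  also have "\<dots> = (\<Sum>k. ennreal (sqrt_coeff (Suc k)) * ennreal ((1 / (1 + s)) ^ Suc (2 * k)))"
    using nn_integral_erlang_density_mult_exp[of 1 s] assms by (simp add: nn_integral_cmult)
  also have "\<dots> = (\<Sum>k. ennreal (sqrt_coeff (Suc k) * (1 / (s + 1)) ^ (2 * k + 1)))"
    using assms by (intro suminf_cong) (simp add: ennreal_mult[symmetric] sqrt_coeff_nonneg add.commute)
  also have "\<dots> = ennreal (psi_m2 s)"
    using psi_m2_sums[OF assms] assms
    by (subst suminf_ennreal2) (auto simp: sqrt_coeff_nonneg sums_iff)
  finally show ?thesis .
qed

lemma frailty_phi_m2: "frailty phi_m2 psi_m2 (density lborel erlang_mixture_density) (\<lambda>v. v)"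
proof (intro frailty.intro frailty_axioms.intro archimedean_generator_phi_m2)
  let ?D = "density lborel erlang_mixture_density"
  show "prob_space ?D"
  proof
    have "emeasure ?D (space ?D) = (\<integral>\<^sup>+v. ennreal (exp (- 0 * v)) \<partial>?D)" by simp
    also have "\<dots> = 1"
      by (simp only: laplace_erlang_mixture_density order_refl) (simp add: psi_m2_def)
    finally show "emeasure ?D (space ?D) = 1" .
  qed
  have vanish: "erlang_mixture_density v = 0" if "v < 0" for v
    using that by (simp add: erlang_mixture_density_def erlang_density_def)
  have "AE v in lborel. 0 < erlang_mixture_density v \<longrightarrow> 0 < v"
    using AE_lborel_singleton[of 0]
    by eventually_elim (metis vanish linorder_neqE_linordered_idom order_less_irrefl)
  then show "AE v in ?D. 0 < v"
    by (subst AE_density) simp_all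
qed (use laplace_erlang_mixture_density in auto)

section \<open>The tree function\<close>

lemma ln_less_minus_one:
  fixes x :: real
  assumes "0 < x" "x \<noteq> 1"
  shows "ln x < x - 1"
proof -
  have "ln x = 2 * ln (sqrt x)" using assms by (simp add: ln_sqrt)
  also have "\<dots> \<le> 2 * (sqrt x - 1)" using ln_le_minus_one[of "sqrt x"] assms by simp
  also have "\<dots> < x - 1"
  proof -
    have "0 < (sqrt x - 1)\<^sup>2" using assms by simp
    also have "(sqrt x - 1)\<^sup>2 = x - 2 * sqrt x + 1"
      using assms by (simp add: power2_eq_square algebra_simps)
    finally show ?thesis by simp
  qed
  finally show ?thesis .
qed

lemma mult_exp_neg_less:
  fixes x :: real
  assumes "0 \<le> x" "x \<noteq> 1"
  shows "x * exp (- x) < exp (- 1)"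
proof (cases "x = 0")
  case False
  then have "ln x < x - 1" using assms by (intro ln_less_minus_one) auto
  then have "exp (ln x) < exp (x - 1)" by simp
  then have "x * exp (- x) < exp (x - 1) * exp (- x)" using assms False by simp
  then show ?thesis by (simp add: exp_add[symmetric])
qed simp

lemma power_div_fact_le_exp:
  fixes x :: real
  assumes "0 \<le> x"
  shows "x ^ n / fact n \<le> exp x"
proof -
  have "(\<Sum>k\<in>{n}. x ^ k /\<^sub>R fact k) \<le> (\<Sum>k. x ^ k /\<^sub>R fact k)"
    using exp_converges[of x] assms by (intro sum_le_suminf) (auto simp: sums_iff)
  then show ?thesis by (simp add: exp_def divide_inverse mult.commute)
qed

context
begin

unbundle Formal_Power_Series.fps_syntax
unbundle no vec_syntax

lemma sum_alternating_binomial_power_eq_0: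
  assumes "k < n"
  shows "(\<Sum>i\<le>n. (-1) ^ (n - i) * real (n choose i) * real i ^ k) = 0"
proof -
  define F :: "real fps" where "F = fps_exp 1 - 1"
  have "(F ^ n) $ k = 0"
    using startsby_zero_power_prefix[of F n] assms by (simp add: F_def)
  moreover have "F ^ n = (\<Sum>i\<le>n. of_nat (n choose i) * fps_exp 1 ^ i * (-1) ^ (n - i))"
    unfolding F_def diff_conv_add_uminus by (rule binomial_ring)
  moreover have "(of_nat (n choose i) * fps_exp 1 ^ i * (-1) ^ (n - i) :: real fps) $ k
      = (-1) ^ (n - i) * real (n choose i) * real i ^ k / fact k" for i
  proof -
    have "(of_nat (n choose i) * fps_exp 1 ^ i * (-1) ^ (n - i) :: real fps)
        = fps_const (real (n choose i)) * fps_exp (real i) * fps_const ((-1) ^ (n - i))"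
      by (simp add: fps_exp_power_mult fps_of_nat fps_const_power[symmetric] fps_const_neg[symmetric])
    then show ?thesis by (simp add: fps_exp_nth)
  qed
  ultimately have "(\<Sum>i\<le>n. (-1) ^ (n - i) * real (n choose i) * real i ^ k / fact k) = 0"
    by (simp add: fps_sum_nth)
  then show ?thesis by (simp add: sum_divide_distrib[symmetric])
qed

(* T(w) = (\<Sum>n. tree_coeff n * w ^ n) is the tree function, T(w) = -W_0(-w) for the principal
   branch W_0 of the Lambert W function; T(x e^-x) = x is an instance of Lagrange inversion. *)
definition tree_coeff :: "nat \<Rightarrow> real" where
  "tree_coeff n = (if n = 0 then 0 else real n ^ (n - 1) / fact n)"

definition tree_fps :: "complex fps" where
  "tree_fps = Abs_fps (\<lambda>n. complex_of_real (tree_coeff n))"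

lemma tree_coeff_nonneg: "0 \<le> tree_coeff n"
  by (simp add: tree_coeff_def)

lemma sum_tree_coeff_exp_coeff:
  "(\<Sum>i=0..n. tree_coeff i * (- real i) ^ (n - i) / fact (n - i)) = (if n = 1 then 1 else 0)"
proof (cases "n \<ge> 2")
  case False
  then have "n = 0 \<or> n = 1" by auto
  then show ?thesis by (auto simp: tree_coeff_def)
next
  case True
  have "tree_coeff i * (- real i) ^ (n - i) / fact (n - i)
      = (-1) ^ (n - i) * real (n choose i) * real i ^ (n - 1) / fact n" if "i \<le> n" for i
  proof (cases "i = 0")
    case True
    then show ?thesis using \<open>n \<ge> 2\<close> by (simp add: tree_coeff_def)
  next
    case False
    have "real i ^ (i - 1) * real i ^ (n - i) = real i ^ (n - 1)"
      using False that by (simp add: power_add[symmetric])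
    moreover have "real (n choose i) = fact n / (fact i * fact (n - i))"
      using binomial_fact[OF that] by simp
    ultimately show ?thesis
      using False by (simp add: tree_coeff_def power_minus[of "real i"] field_simps)
  qed
  then have "(\<Sum>i=0..n. tree_coeff i * (- real i) ^ (n - i) / fact (n - i))
      = (\<Sum>i\<le>n. (-1) ^ (n - i) * real (n choose i) * real i ^ (n - 1)) / fact n"
    by (simp add: sum_divide_distrib atLeast0AtMost)
  also have "\<dots> = 0"
    using sum_alternating_binomial_power_eq_0[of "n - 1" n] True by simp
  finally show ?thesis using True by simp
qed

lemma tree_fps_compose: "tree_fps oo (fps_X * fps_exp (-1)) = fps_X"
proof (rule fps_ext)
  fix n
  have "(fps_X * fps_exp (-1) :: complex fps) ^ i $ n = (- of_nat i) ^ (n - i) / fact (n - i)"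
    if "i \<le> n" for i
  proof -
    have "(fps_X * fps_exp (-1)) ^ i = (fps_X ^ i * fps_exp (of_nat i * (-1)) :: complex fps)"
      by (simp add: power_mult_distrib fps_exp_power_mult)
    then show ?thesis using that by (simp add: fps_X_power_mult_nth)
  qed
  then have "(tree_fps oo (fps_X * fps_exp (-1))) $ n
      = complex_of_real (\<Sum>i=0..n. tree_coeff i * (- real i) ^ (n - i) / fact (n - i))"
    by (simp add: fps_compose_nth tree_fps_def)
  then show "(tree_fps oo (fps_X * fps_exp (-1))) $ n = fps_X $ n"
    by (simp add: sum_tree_coeff_exp_coeff)
qed

lemma tree_coeff_le: "tree_coeff n \<le> exp 1 ^ n"
proof (cases "n = 0")
  case False
  have "tree_coeff n \<le> real n ^ n / fact n"
    using False by (auto simp: tree_coeff_def intro!: divide_right_mono power_increasing)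
  also have "\<dots> \<le> exp (real n)" by (rule power_div_fact_le_exp) simp
  finally show ?thesis by (simp add: exp_of_nat_mult[symmetric])
qed (simp add: tree_coeff_def)

lemma summable_tree_coeff:
  assumes "0 \<le> r" "r < exp (- 1)"
  shows "summable (\<lambda>n. tree_coeff n * r ^ n)"
proof (rule summable_comparison_test')
  have "exp 1 * r < 1"
    using assms mult_strict_left_mono[of r "exp (-1)" "exp 1"] by (simp add: exp_minus)
  then show "summable (\<lambda>n. (exp 1 * r) ^ n)"
    using assms by (intro summable_geometric) simp
  show "norm (tree_coeff n * r ^ n) \<le> (exp 1 * r) ^ n" for n
    using tree_coeff_le[of n] assms tree_coeff_nonneg[of n]
    by (simp add: abs_mult power_mult_distrib mult_right_mono)
qed

lemma fps_conv_radius_tree_fps: "ereal (exp (- 1)) \<le> fps_conv_radius tree_fps"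
  unfolding fps_conv_radius_def
proof (rule conv_radius_geI_ex')
  fix r :: real assume "0 < r" "ereal r < ereal (exp (- 1))"
  then have "summable (\<lambda>n. complex_of_real (tree_coeff n * r ^ n))"
    by (intro summable_of_real summable_tree_coeff) auto
  then show "summable (\<lambda>n. tree_fps $ n * complex_of_real r ^ n)"
    by (simp add: tree_fps_def)
qed

lemma eval_tree_fps_near_0: "eventually (\<lambda>z. eval_fps tree_fps (z * exp (- z)) = z) (nhds 0)"
proof -
  have "0 < fps_conv_radius tree_fps"
    using fps_conv_radius_tree_fps by (rule less_le_trans[rotated]) simp
  then have "eval_fps tree_fps has_fps_expansion tree_fps"
    by (rule eval_fps_has_fps_expansion)
  moreover have "(\<lambda>z::complex. z * exp (- z)) has_fps_expansion fps_X * fps_exp (-1)"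
    by (intro has_fps_expansion_mult has_fps_expansion_fps_X has_fps_expansion_exp_neg1)
  ultimately have "(eval_fps tree_fps \<circ> (\<lambda>z. z * exp (- z))) has_fps_expansion
                     (tree_fps oo (fps_X * fps_exp (-1)))"
    by (rule has_fps_expansion_compose) simp
  then have "(eval_fps tree_fps \<circ> (\<lambda>z. z * exp (- z))) has_fps_expansion fps_X"
    by (simp only: tree_fps_compose)
  then show ?thesis
    by (auto simp: has_fps_expansion_def elim!: eventually_mono)
qed

lemma holomorphic_on_eval_tree_fps_mult_exp:
  "(\<lambda>z. eval_fps tree_fps (z * exp (- z))) holomorphic_on {z. norm (z * exp (- z)) < exp (- 1)}"
proof -
  have image: "(\<lambda>z. z * exp (- z)) ` {z. norm (z * exp (- z)) < exp (- 1)}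
                 \<subseteq> eball 0 (fps_conv_radius tree_fps)"
  proof
    fix w assume "w \<in> (\<lambda>z. z * exp (- z)) ` {z. norm (z * exp (- z)) < exp (- 1)}"
    then have "ereal (norm w) < ereal (exp (- 1))" by auto
    then have "ereal (norm w) < fps_conv_radius tree_fps"
      using fps_conv_radius_tree_fps by (rule less_le_trans)
    then show "w \<in> eball 0 (fps_conv_radius tree_fps)" by simp
  qed
  have "(eval_fps tree_fps \<circ> (\<lambda>z. z * exp (- z))) holomorphic_on {z. norm (z * exp (- z)) < exp (- 1)}"
    by (rule holomorphic_on_compose_gen[OF _ holomorphic_on_eval_fps[OF order_refl] image])
       (intro holomorphic_intros)
  then show ?thesis by (simp add: o_def)
qed

lemma closed_segment_subset_mult_exp_neg_less:
  assumes "0 \<le> x" "x < 1"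
  shows "closed_segment 0 (complex_of_real x) \<subseteq> {z. norm (z * exp (- z)) < exp (- 1)}"
proof
  fix z assume "z \<in> closed_segment 0 (complex_of_real x)"
  then obtain t where t: "0 \<le> t" "t \<le> 1" and z: "z = complex_of_real (t * x)"
    by (auto simp: in_segment scaleR_conv_of_real)
  have "t * x < 1" using t assms mult_left_le_one_le[of x t] by linarith
  then have "t * x * exp (- (t * x)) < exp (- 1)"
    using t assms by (intro mult_exp_neg_less) auto
  moreover have "norm (z * exp (- z)) = t * x * exp (- (t * x))"
    using t assms by (simp add: z exp_of_real[symmetric] norm_mult)
  ultimately show "z \<in> {z. norm (z * exp (- z)) < exp (- 1)}" by simp
qed

(* The identity holds near 0 and is continued analytically along [0, x], where |z e^-z| stays
   below the radius of convergence e^-1. *)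
lemma eval_tree_fps_mult_exp:
  assumes "0 \<le> x" "x < 1"
  shows "eval_fps tree_fps (complex_of_real (x * exp (- x))) = complex_of_real x"
proof -
  define S0 where "S0 = {z::complex. norm (z * exp (- z)) < exp (- 1)}"
  define S where "S = connected_component_set S0 0"
  have "open S0" unfolding S0_def by (intro open_Collect_less continuous_intros)
  then have "open S" unfolding S_def by (rule open_connected_component)
  have "0 \<in> S" unfolding S_def by (simp add: S0_def)
  have "complex_of_real x \<in> S"
    using closed_segment_subset_mult_exp_neg_less[OF assms]
      connected_component_maximal[of 0 "closed_segment 0 (complex_of_real x)" S0]
    by (auto simp: S_def S0_def)
  have holo: "(\<lambda>z. eval_fps tree_fps (z * exp (- z))) holomorphic_on S"
    using holomorphic_on_eval_tree_fps_mult_exp connected_component_subset[of S0 0]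
    by (auto simp: S_def S0_def intro: holomorphic_on_subset)
  obtain U where "open U" "0 \<in> U" and U: "\<And>z. z \<in> U \<Longrightarrow> eval_fps tree_fps (z * exp (- z)) = z"
    using eval_tree_fps_near_0 by (auto simp: eventually_nhds)
  have "eval_fps tree_fps (complex_of_real x * exp (- complex_of_real x)) = complex_of_real x"
  proof (rule analytic_continuation_open[of "U \<inter> S" S])
    show "open (U \<inter> S)" using \<open>open U\<close> \<open>open S\<close> by blast
    show "U \<inter> S \<noteq> {}" using \<open>0 \<in> U\<close> \<open>0 \<in> S\<close> by blast
    show "connected S" by (simp add: S_def)
    show "(\<lambda>z. z) holomorphic_on S" by (intro holomorphic_intros)
  qed (use \<open>open S\<close> \<open>complex_of_real x \<in> S\<close> holo U in auto)
  then show ?thesis by (simp add: exp_of_real[symmetric])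
qed

end

lemma tree_coeff_sums_less_1:
  assumes "0 \<le> x" "x < 1"
  shows "(\<lambda>n. tree_coeff n * (x * exp (- x)) ^ n) sums x"
proof -
  define w where "w = x * exp (- x)"
  have "summable (\<lambda>n. tree_coeff n * w ^ n)"
    using assms mult_exp_neg_less[of x] by (intro summable_tree_coeff) (auto simp: w_def)
  then have "(\<lambda>n. fps_nth tree_fps n * complex_of_real w ^ n) sums complex_of_real (\<Sum>n. tree_coeff n * w ^ n)"
    unfolding tree_fps_def by (simp flip: of_real_mult of_real_power add: sums_of_real summable_sums)
  then have "complex_of_real (\<Sum>n. tree_coeff n * w ^ n) = complex_of_real x"
    using eval_tree_fps_mult_exp[OF assms] by (simp add: eval_fps_def sums_iff w_def)
  then show ?thesis
    using \<open>summable (\<lambda>n. tree_coeff n * w ^ n)\<close> by (simp add: summable_sums_iff w_def)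
qed

lemma tree_coeff_sums_exp_neg_1: "(\<lambda>n. tree_coeff n * exp (- 1) ^ n) sums 1"
proof (rule sums_of_nonneg_power_series_at_left_1[where h = "\<lambda>t. t * exp (1 - t)" and g = "\<lambda>t. t"])
  show "0 \<le> tree_coeff n * exp (- 1) ^ n" for n by (simp add: tree_coeff_nonneg)
  have scale: "exp (- 1) * (t * exp (1 - t)) = t * exp (- t)" for t :: real
    by (simp add: exp_diff exp_minus field_simps)
  show "0 \<le> t * exp (1 - t) \<and> t * exp (1 - t) \<le> 1" if "0 < t" "t < 1" for t :: real
  proof -
    have "t * exp (1 - t) = t * exp (- t) * exp 1"
      by (simp add: exp_diff exp_minus field_simps)
    also have "\<dots> < exp (- 1) * exp 1"
      using mult_exp_neg_less[of t] that by simp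
    also have "\<dots> = 1" by (simp add: exp_minus)
    finally show ?thesis using that by simp
  qed
  have "((\<lambda>t. t * exp (1 - t)) \<longlongrightarrow> 1 * exp (1 - 1)) (at_left (1::real))"
    by (intro tendsto_intros)
  then show "((\<lambda>t. t * exp (1 - t)) \<longlongrightarrow> 1) (at_left (1::real))" by simp
  show "(\<lambda>n. tree_coeff n * exp (- 1) ^ n * (t * exp (1 - t)) ^ n) sums t" if "0 < t" "t < 1" for t :: real
    using tree_coeff_sums_less_1[of t] that
    by (simp add: mult.assoc power_mult_distrib[symmetric] scale)
qed (rule tendsto_ident_at)

lemma tree_coeff_sums:
  assumes "0 \<le> x" "x \<le> 1"
  shows "(\<lambda>n. tree_coeff n * (x * exp (- x)) ^ n) sums x"
  using tree_coeff_sums_less_1[of x] tree_coeff_sums_exp_neg_1 assms by (cases "x = 1") auto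

section \<open>The generator \<open>phi_m1\<close>\<close>

definition psi_m1 :: "real \<Rightarrow> real" where
  "psi_m1 s = (\<Sum>n. tree_coeff n * exp (- (s + 1)) ^ n)"

lemma phi_m1_surj:
  fixes s :: real
  assumes "0 \<le> s"
  obtains x where "0 < x" "x \<le> 1" "x - 1 - ln x = s"
proof -
  define a where "a = exp (- (s + 1))"
  have "0 < a" "a \<le> 1" using assms by (auto simp: a_def)
  have "\<exists>x. a \<le> x \<and> x \<le> 1 \<and> x - 1 - ln x = s"
  proof (rule IVT2)
    show "1 - 1 - ln 1 \<le> s" "a \<le> 1" using assms \<open>a \<le> 1\<close> by simp_all
    show "s \<le> a - 1 - ln a" using \<open>0 < a\<close> by (simp add: a_def)
    show "\<forall>x. a \<le> x \<and> x \<le> 1 \<longrightarrow> isCont (\<lambda>x. x - 1 - ln x) x"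
      using \<open>0 < a\<close> by (auto intro!: continuous_intros)
  qed
  then obtain x where x: "a \<le> x" "x \<le> 1" "x - 1 - ln x = s" by blast
  show ?thesis by (rule that[of x]) (use x \<open>0 < a\<close> in auto)
qed

lemma psi_m1_eq:
  assumes "0 < x" "x \<le> 1" "x - 1 - ln x = s"
  shows "(\<lambda>n. tree_coeff n * exp (- (s + 1)) ^ n) sums x" "psi_m1 s = x"
proof -
  have "exp (- (s + 1)) = x * exp (- x)"
    using assms by (simp add: exp_diff exp_minus field_simps flip: assms(3))
  then show "(\<lambda>n. tree_coeff n * exp (- (s + 1)) ^ n) sums x"
    using tree_coeff_sums[of x] assms by simp
  then show "psi_m1 s = x" by (simp add: psi_m1_def sums_iff)
qed

lemma psi_m1_sums:
  assumes "0 \<le> s"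
  shows "(\<lambda>n. tree_coeff n * exp (- (s + 1)) ^ n) sums psi_m1 s"
proof -
  obtain x where "0 < x" "x \<le> 1" "x - 1 - ln x = s" using assms by (rule phi_m1_surj)
  then show ?thesis by (metis psi_m1_eq)
qed

lemma archimedean_generator_phi_m1: "archimedean_generator phi_m1 psi_m1"
proof (unfold_locales)
  show "phi_m1 0 = \<infinity>" "phi_m1 1 = 0" by (simp_all add: phi_m1_def)
  show "phi_m1 v < phi_m1 u" if "0 \<le> u" "u < v" "v \<le> 1" for u v
  proof (cases "u = 0")
    case False
    then have "0 < u" using that by simp
    have "ln u - ln v = ln (u / v)" using \<open>0 < u\<close> that by (simp add: ln_div)
    also have "\<dots> < u / v - 1" using \<open>0 < u\<close> that by (intro ln_less_minus_one) auto
    also have "u / v - 1 = (u - v) / v" using that by (simp add: field_simps)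
    also have "\<dots> \<le> u - v"
      using that by (simp add: divide_le_eq mult_le_cancel_left_neg[of "u - v" v 1])
    finally show ?thesis using \<open>0 < u\<close> that by (simp add: phi_m1_def)
  qed (use that in \<open>simp add: phi_m1_def\<close>)
  fix s :: real assume "0 \<le> s"
  then obtain x where x: "0 < x" "x \<le> 1" "x - 1 - ln x = s" by (rule phi_m1_surj)
  then have "psi_m1 s = x" by (rule psi_m1_eq)
  then show "0 < psi_m1 s \<and> psi_m1 s \<le> 1" "phi_m1 (psi_m1 s) = ereal s"
    using x by (simp_all add: phi_m1_def)
qed

(* The Borel distribution with parameter 1 (not related to Borel sets). *)
definition borel_pmf :: "nat pmf" where
  "borel_pmf = embed_pmf (\<lambda>n. tree_coeff n * exp (- 1) ^ n)"

lemma pmf_borel_pmf: "pmf borel_pmf n = tree_coeff n * exp (- 1) ^ n"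
  unfolding borel_pmf_def
proof (rule pmf_embed_pmf)
  show "0 \<le> tree_coeff n * exp (- 1) ^ n" for n by (simp add: tree_coeff_nonneg)
  then show "(\<integral>\<^sup>+n. ennreal (tree_coeff n * exp (- 1) ^ n) \<partial>count_space UNIV) = 1"
    using tree_coeff_sums_exp_neg_1
    by (simp add: nn_integral_count_space_nat suminf_ennreal2 sums_iff)
qed

lemma laplace_borel_pmf:
  assumes "0 \<le> s"
  shows "(\<integral>\<^sup>+n. ennreal (exp (- s * real n)) \<partial>measure_pmf borel_pmf) = ennreal (psi_m1 s)"
proof -
  have "pmf borel_pmf n * exp (- s * real n) = tree_coeff n * exp (- (s + 1)) ^ n" for n
    by (simp add: pmf_borel_pmf exp_of_nat_mult[symmetric] exp_add[symmetric] algebra_simps)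
  then have "(\<integral>\<^sup>+n. ennreal (exp (- s * real n)) \<partial>measure_pmf borel_pmf)
      = (\<Sum>n. ennreal (tree_coeff n * exp (- (s + 1)) ^ n))"
    by (simp add: nn_integral_measure_pmf nn_integral_count_space_nat ennreal_mult[symmetric])
  also have "\<dots> = ennreal (psi_m1 s)"
    using psi_m1_sums[OF assms] by (simp add: suminf_ennreal2 sums_iff tree_coeff_nonneg)
  finally show ?thesis .
qed

lemma frailty_phi_m1: "frailty phi_m1 psi_m1 (measure_pmf borel_pmf) real"
proof (intro frailty.intro frailty_axioms.intro archimedean_generator_phi_m1)
  show "AE n in measure_pmf borel_pmf. 0 < real n"
    by (auto simp: AE_measure_pmf_iff set_pmf_iff pmf_borel_pmf tree_coeff_def split: if_splits)
qed (use laplace_borel_pmf prob_space_measure_pmf in auto)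

theorem theorem7:
  assumes "CARD('n::finite) \<ge> 3"
  shows "is_copula (arch_C phi_m1 :: real^'n \<Rightarrow> real) \<and>
         is_copula (arch_C phi_m2 :: real^'n \<Rightarrow> real)"
  using frailty.is_copula_arch_C[OF frailty_phi_m1] frailty.is_copula_arch_C[OF frailty_phi_m2]
  by blast

end
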